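(* Assume the network is regular. Define a relation $\approx$ on $\mathcal E$ by $j_1\approx j_2$ iff $j_1=j_2$, or ($j_1\leadsto j_2$ and $j_2\leadsto j_1$). Then: (a) $\approx$ is an equivalence relation on $\mathcal E$. (b) If $\varphi$ is an equivalence class with at least two elements, then $j\leadsto j'$ for all $j,j'\in\varphi$ (including $j=j'$). (c) If $j_1\leadsto j_2$ and $j_1\not\approx j_2$, then for all $j_1'\approx j_1$ and $j_2'\approx j_2$ one has $j_1'\leadsto j_2'$ and $j_2'\not\leadsto j_1'$. Consequently, the relation on equivalence classes "$\varphi\prec\varphi'$ iff $\varphi\neq\varphi'$ and some element of $\varphi$ influences some element of $\varphi'$" is a strict partial order, and for $j^*\in\varphi^*$, $j'\ne j^*$: $j^*\leadsto j'$ iff $j'\in\varphi^*$ or $\varphi^*\prec\varphi'$, where $\varphi'$ is the class of $j'$. (d) For $j\in\mathcal E$ let $I_{\mathcal M}(j)=\{m\in\mathcal M: j\leadsto m\}$. If $j_1\leadsto j_2$ then $I_{\mathcal M}(j_1)\supseteq I_{\mathcal M}(j_2)$; if $j_1\approx j_2$ then $I_{\mathcal M}(j_1)=I_{\mathcal M}(j_2)$. (e) For $j^*\in\mathcal E$ with class $\varphi^*$, let $\mathcal M^{\neg d}(j^* )=\{m'\in\mathcal M:\ j^*\leadsto j'\leadsto m' \text{ for some } j'\notin\varphi^*\}$ and $\mathcal M^d(j^* )=I_{\mathcal M}(j^* )\setminus\mathcal M^{\neg d}(j^* )$. Then $\mathcal M^{\neg d}(j^* )\subseteq I_{\mathcal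 M}(j^* )$, and $j^*\leadsto m'$ iff either $m'\in\mathcal M^d(j^* )$, or $m'\in\mathcal M^d(j')$ for some $j'\notin\varphi^*$ with $j^*\leadsto j'$; i.e. $I_{\mathcal M}(j^* )=\mathcal M^d(j^* )\cup\bigcup_{j^*\leadsto j'\notin\varphi^*}\mathcal M^d(j')$.
   Context: A reaction network consists of a finite set of metabolites $\mathcal M=\{1,\dots,M\}$ and a finite set of reactions $\mathcal E=\{1,\dots,E\}$. Each reaction $j$ has an input stoichiometric vector $y^j\in\mathbb R_{\ge0}^M$ and an output stoichiometric vector $\bar y^j\in\mathbb R_{\ge0}^M$. Write $m\vdash j$ iff $y^j_m\neq 0$. The stoichiometric matrix $S$ is the real $M\times E$ matrix whose $j$-th column is $S^j=\bar y^j-y^j$; it is assumed to have full rank $M$. The rate matrix $R=(r_{jm})$ is the $E\times M$ matrix whose entries $r_{jm}$ with $m\vdash j$ are independent indeterminates, and $r_{jm}=0$ whenever $m\not\vdash j$. "Nonzero algebraically" means nonzero as a polynomial/rational function in these indeterminates. The network is regular if $\det(SR)\ne0$ algebraically. Let $B=\begin{pmatrix}-\mathrm{id}_{\mathcal E}&R\\ S&0\end{pmatrix}$, a square matrix with rows and columns indexed by the disjoint union $\mathcal E\sqcup\mathcal M$; for a regular network it is invertible over the field of rational functions in the $r_{jm}$. For $\alpha\in\mathcal E\sqcup\mathcal M$ set $z^\alpha=-B^{-1}e_\alpha$, and write $\alpha\leadsto\beta$ for $\beta\in\mathcal E\sqcup\mathcal M$ if $z^\alpha_\beta$ is nonzero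 algebraically. *)

theory Defs
  imports "HOL-Analysis.Analysis"
begin

text \<open>Reaction network: metabolites are the finite type 'm, reactions the finite type 'e.
  The input and output stoichiometric vectors are y j and ybar j (functions 'm \<Rightarrow> real).
  m \<turnstile> j iff y j m \<noteq> 0.\<close>

definition stoich :: "('e::finite \<Rightarrow> 'm::finite \<Rightarrow> real) \<Rightarrow> ('e \<Rightarrow> 'm \<Rightarrow> real) \<Rightarrow> real^'e^'m" where
  "stoich y ybar = (\<chi> m j. ybar j m - y j m)"

text \<open>Rate matrix evaluated at a point r of the indeterminates r_jm (only entries with m \<turnstile> j are used).\<close>
definition rate_matrix :: "('e::finite \<Rightarrow> 'm::finite \<Rightarrow> real) \<Rightarrow> ('e \<Rightarrow> 'm \<Rightarrow> real) \<Rightarrow> real^'m^'e" where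
  "rate_matrix y r = (\<chi> j m. if y j m \<noteq> 0 then r j m else 0)"

text \<open>Regularity: det(SR) is a nonzero polynomial in the indeterminates, i.e. it does not vanish
  at some real evaluation point.\<close>
definition regular :: "('e::finite \<Rightarrow> 'm::finite \<Rightarrow> real) \<Rightarrow> ('e \<Rightarrow> 'm \<Rightarrow> real) \<Rightarrow> bool" where
  "regular y ybar \<longleftrightarrow> (\<exists>r. det (stoich y ybar ** rate_matrix y r) \<noteq> 0)"

definition Bmat :: "('e::finite \<Rightarrow> 'm::finite \<Rightarrow> real) \<Rightarrow> ('e \<Rightarrow> 'm \<Rightarrow> real) \<Rightarrow> ('e \<Rightarrow> 'm \<Rightarrow> real)
    \<Rightarrow> real^('e + 'm)^('e + 'm)" where
  "Bmat y ybar r = (\<chi> a b. case (a, b) of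
       (Inl j, Inl j') \<Rightarrow> (if j = j' then -1 else 0)
     | (Inl j, Inr m) \<Rightarrow> rate_matrix y r $ j $ m
     | (Inr m, Inl j) \<Rightarrow> stoich y ybar $ m $ j
     | (Inr m, Inr m') \<Rightarrow> 0)"

definition zvec :: "('e::finite \<Rightarrow> 'm::finite \<Rightarrow> real) \<Rightarrow> ('e \<Rightarrow> 'm \<Rightarrow> real) \<Rightarrow> ('e \<Rightarrow> 'm \<Rightarrow> real)
    \<Rightarrow> 'e + 'm \<Rightarrow> real^('e + 'm)" where
  "zvec y ybar r \<alpha> = - (matrix_inv (Bmat y ybar r) *v axis \<alpha> 1)"

text \<open>alpha influences beta: z^alpha_beta is a nonzero rational function of the r_jm,
  i.e. it is nonzero at some real point where B (equivalently SR) is invertible.\<close>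
definition influences :: "('e::finite \<Rightarrow> 'm::finite \<Rightarrow> real) \<Rightarrow> ('e \<Rightarrow> 'm \<Rightarrow> real)
    \<Rightarrow> 'e + 'm \<Rightarrow> 'e + 'm \<Rightarrow> bool" where
  "influences y ybar \<alpha> \<beta> \<longleftrightarrow>
     (\<exists>r. det (stoich y ybar ** rate_matrix y r) \<noteq> 0 \<and> zvec y ybar r \<alpha> $ \<beta> \<noteq> 0)"

definition rxn_equiv :: "('e::finite \<Rightarrow> 'm::finite \<Rightarrow> real) \<Rightarrow> ('e \<Rightarrow> 'm \<Rightarrow> real) \<Rightarrow> 'e \<Rightarrow> 'e \<Rightarrow> bool" where
  "rxn_equiv y ybar j1 j2 \<longleftrightarrow> j1 = j2 \<or>
     (influences y ybar (Inl j1) (Inl j2) \<and> influences y ybar (Inl j2) (Inl j1))"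

definition rxn_class :: "('e::finite \<Rightarrow> 'm::finite \<Rightarrow> real) \<Rightarrow> ('e \<Rightarrow> 'm \<Rightarrow> real) \<Rightarrow> 'e \<Rightarrow> 'e set" where
  "rxn_class y ybar j = {j'. rxn_equiv y ybar j j'}"

definition rxn_classes :: "('e::finite \<Rightarrow> 'm::finite \<Rightarrow> real) \<Rightarrow> ('e \<Rightarrow> 'm \<Rightarrow> real) \<Rightarrow> 'e set set" where
  "rxn_classes y ybar = UNIV // {(j1, j2). rxn_equiv y ybar j1 j2}"

definition class_prec :: "('e::finite \<Rightarrow> 'm::finite \<Rightarrow> real) \<Rightarrow> ('e \<Rightarrow> 'm \<Rightarrow> real) \<Rightarrow> 'e set \<Rightarrow> 'e set \<Rightarrow> bool" where
  "class_prec y ybar \<phi> \<phi>' \<longleftrightarrow> \<phi> \<noteq> \<phi>' \<and> (\<exists>j\<in>\<phi>. \<exists>j'\<in>\<phi>'. influences y ybar (Inl j) (Inl j'))"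

definition IM :: "('e::finite \<Rightarrow> 'm::finite \<Rightarrow> real) \<Rightarrow> ('e \<Rightarrow> 'm \<Rightarrow> real) \<Rightarrow> 'e \<Rightarrow> 'm set" where
  "IM y ybar j = {m. influences y ybar (Inl j) (Inr m)}"

definition M_nd :: "('e::finite \<Rightarrow> 'm::finite \<Rightarrow> real) \<Rightarrow> ('e \<Rightarrow> 'm \<Rightarrow> real) \<Rightarrow> 'e \<Rightarrow> 'm set" where
  "M_nd y ybar js = {m'. \<exists>j'. j' \<notin> rxn_class y ybar js \<and>
      influences y ybar (Inl js) (Inl j') \<and> influences y ybar (Inl j') (Inr m')}"

definition M_d :: "('e::finite \<Rightarrow> 'm::finite \<Rightarrow> real) \<Rightarrow> ('e \<Rightarrow> 'm \<Rightarrow> real) \<Rightarrow> 'e \<Rightarrow> 'm set" where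
  "M_d y ybar js = IM y ybar js - M_nd y ybar js"

end

theory Submission
  imports Defs "HOL-Computational_Algebra.Polynomial"
begin

text \<open>Everything rests on transitivity of influence through a reaction: \<open>j1 \<leadsto> j2\<close> and
  \<open>j2 \<leadsto> \<beta>\<close> imply \<open>j1 \<leadsto> \<beta>\<close>. On a line in rate space, \<open>det (S R)\<close> and, by Cramer's rule,
  \<open>z^\<alpha>_\<beta> * det B\<close> are polynomials, so the two influences have a common witness point.
  There, row \<open>j2\<close> of \<open>B z^j1 = - e_j1\<close> reads \<open>z^j1_j2 = (\<Sum>m. r_(j2,m) z^j1_m)\<close>, so
  \<open>r_(j2,m) z^j1_m \<noteq> 0\<close> for some \<open>m \<turnstile> j2\<close>. If \<open>z^j1_\<beta> = 0\<close>, changing \<open>r_(j2,m)\<close> is a rank-one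
  update of \<open>B\<close>, which by the Sherman-Morrison formula adds a nonzero multiple of \<open>z^j2\<close> to
  \<open>z^j1\<close> and so makes its \<open>\<beta>\<close>-entry nonzero. The remaining parts follow from this
  transitivity by order-theoretic arguments.\<close>

lemma real_polynomial_function_imp_poly:
  fixes f :: "real \<Rightarrow> real"
  assumes "real_polynomial_function f"
  shows "\<exists>p. f = poly p"
  using assms
proof (induction f rule: real_polynomial_function.induct)
  case (linear f)
  then obtain c where "f = (\<lambda>x. x * c)" by (auto simp: real_bounded_linear)
  then show ?case by (intro exI[of _ "[:0, c:]"]) auto
next
  case (const c)
  show ?case by (intro exI[of _ "[:c:]"]) auto
next
  case (add f g)
  then show ?case by (metis poly_add)
next
  case (mult f g)
  then show ?case by (metis poly_mult)
qed

lemma real_polynomial_function_finite_zeros: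
  fixes f :: "real \<Rightarrow> real"
  assumes "real_polynomial_function f" and "f t0 \<noteq> 0"
  shows "finite {t. f t = 0}"
proof -
  obtain p where p: "f = poly p" using real_polynomial_function_imp_poly[OF assms(1)] ..
  with assms(2) have "p \<noteq> 0" by auto
  then show ?thesis using poly_roots_finite p by blast
qed

lemma real_polynomial_function_det:
  fixes A :: "'a::real_normed_vector \<Rightarrow> real^'n^'n"
  assumes "\<And>i j. real_polynomial_function (\<lambda>t. A t $ i $ j)"
  shows "real_polynomial_function (\<lambda>t. det (A t))"
  unfolding det_def
  by (intro real_polynomial_function_sum real_polynomial_function_prod
      real_polynomial_function.intros(2,4) finite_permutations assms) simp_all

lemma rank_one_update_solution:
  fixes B B' :: "'a::field^'n^'n"
  assumes inv: "invertible B'" and update: "\<And>v. B' *v v = B *v v + (s * v $ k) *s u"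
    and "u \<noteq> 0" and z1: "B *v z1 = b" and z2: "B *v z2 = - u"
  shows "1 - s * z2 $ k \<noteq> 0"
    and "B' *v (z1 + (s * z1 $ k / (1 - s * z2 $ k)) *s z2) = b"
proof -
  have B'z2: "B' *v z2 = - ((1 - s * z2 $ k) *s u)"
    using update[of z2] z2 by (simp add: algebra_simps)
  show nz: "1 - s * z2 $ k \<noteq> 0"
  proof
    assume "1 - s * z2 $ k = 0"
    then have "B' *v z2 = B' *v 0" using B'z2 by simp
    then have "z2 = 0" using inj_matrix_vector_mult[OF inv] by (meson injD)
    then show False using z2 \<open>u \<noteq> 0\<close> by simp
  qed
  define c where "c = s * z1 $ k / (1 - s * z2 $ k)"
  have "s * (z1 + c *s z2) $ k = c"
    using nz by (simp add: c_def field_simps)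
  then have "B' *v (z1 + c *s z2) = B *v z1 + c *s (B *v z2) + c *s u"
    using update[of "z1 + c *s z2"]
    by (simp add: matrix_vector_right_distrib vector_scalar_commute)
  then show "B' *v (z1 + c *s z2) = b"
    by (simp add: z1 z2)
qed

abbreviation SR :: "('e::finite \<Rightarrow> 'm::finite \<Rightarrow> real) \<Rightarrow> ('e \<Rightarrow> 'm \<Rightarrow> real)
    \<Rightarrow> ('e \<Rightarrow> 'm \<Rightarrow> real) \<Rightarrow> real^'m^'m" where
  "SR y ybar r \<equiv> stoich y ybar ** rate_matrix y r"

lemma Bmat_mult_Inl:
  "(Bmat y ybar r *v v) $ Inl j = - v $ Inl j + (\<Sum>m\<in>UNIV. rate_matrix y r $ j $ m * v $ Inr m)"
proof -
  have "(Bmat y ybar r *v v) $ Inl j = (\<Sum>j'\<in>UNIV. (if j = j' then -1 else 0) * v $ Inl j')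
      + (\<Sum>m\<in>UNIV. rate_matrix y r $ j $ m * v $ Inr m)"
    unfolding matrix_vector_mult_def
    by (simp add: UNIV_Plus_UNIV[symmetric] sum.Plus Bmat_def del: UNIV_Plus_UNIV)
  also have "(\<Sum>j'\<in>UNIV. (if j = j' then -1 else 0) * v $ Inl j') = - v $ Inl j"
    by (simp add: if_distrib[of "\<lambda>c. c * _"] cong: if_cong)
  finally show ?thesis .
qed

lemma Bmat_mult_Inr:
  "(Bmat y ybar r *v v) $ Inr m = (\<Sum>j\<in>UNIV. stoich y ybar $ m $ j * v $ Inl j)"
  unfolding matrix_vector_mult_def
  by (simp add: UNIV_Plus_UNIV[symmetric] sum.Plus Bmat_def del: UNIV_Plus_UNIV)

text \<open>A kernel vector \<open>(x, w)\<close> of \<open>B\<close> satisfies \<open>x = R w\<close> and \<open>S x = 0\<close>, hence \<open>S R w = 0\<close>.\<close>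

lemma invertible_Bmat:
  assumes "det (SR y ybar r) \<noteq> 0"
  shows "invertible (Bmat y ybar r)"
proof -
  have kernel: "v = 0" if "Bmat y ybar r *v v = 0" for v
  proof -
    define x where "x = (\<chi> j. v $ Inl j)"
    define w where "w = (\<chi> m. v $ Inr m)"
    have x: "x = rate_matrix y r *v w"
      using that Bmat_mult_Inl[of y ybar r v]
      by (auto simp: vec_eq_iff x_def w_def matrix_vector_mult_def)
    have "stoich y ybar *v x = 0"
      using that Bmat_mult_Inr[of y ybar r v]
      by (auto simp: vec_eq_iff x_def matrix_vector_mult_def)
    then have "SR y ybar r *v w = SR y ybar r *v 0"
      by (simp add: x matrix_vector_mul_assoc)
    then have "w = 0"
      using assms inj_matrix_vector_mult invertible_det_nz by (metis injD)
    then have "x = 0" using x by simp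
    then show "v = 0"
      using \<open>w = 0\<close> by (auto simp: vec_eq_iff x_def w_def) (metis sumE)
  qed
  then have "inj ((*v) (Bmat y ybar r))"
  proof (intro injI)
    fix a b assume "Bmat y ybar r *v a = Bmat y ybar r *v b"
    then have "Bmat y ybar r *v (a - b) = 0" by (simp add: matrix_vector_mult_diff_distrib)
    then show "a = b" using kernel by fastforce
  qed
  then show ?thesis
    using det_nz_iff_inj[OF matrix_vector_mul_linear[of "Bmat y ybar r"]]
    by (simp add: invertible_det_nz)
qed

lemma Bmat_mult_zvec:
  assumes "det (SR y ybar r) \<noteq> 0"
  shows "Bmat y ybar r *v zvec y ybar r \<alpha> = - axis \<alpha> 1"
proof -
  let ?B = "Bmat y ybar r"
  have "\<exists>A'. ?B ** A' = mat 1 \<and> A' ** ?B = mat 1"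
    using invertible_Bmat[OF assms] unfolding invertible_def .
  then have "?B ** matrix_inv ?B = mat 1"
    unfolding matrix_inv_def by (rule someI2_ex) blast
  then show ?thesis
    by (simp add: zvec_def vec.neg matrix_vector_mul_assoc)
qed

lemma zvec_eqI:
  assumes "det (SR y ybar r) \<noteq> 0" and "Bmat y ybar r *v w = - axis \<alpha> 1"
  shows "zvec y ybar r \<alpha> = w"
  using Bmat_mult_zvec[OF assms(1)] assms(2) inj_matrix_vector_mult[OF invertible_Bmat[OF assms(1)]]
  by (metis injD)

lemma zvec_Inl_eq_sum:
  assumes "det (SR y ybar r) \<noteq> 0" and "\<alpha> \<noteq> Inl j"
  shows "zvec y ybar r \<alpha> $ Inl j = (\<Sum>m\<in>UNIV. rate_matrix y r $ j $ m * zvec y ybar r \<alpha> $ Inr m)"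
proof -
  have "(Bmat y ybar r *v zvec y ybar r \<alpha>) $ Inl j = 0"
    using assms by (simp add: Bmat_mult_zvec axis_def)
  then show ?thesis by (simp add: Bmat_mult_Inl)
qed

definition cramer_numerator :: "('e::finite \<Rightarrow> 'm::finite \<Rightarrow> real) \<Rightarrow> ('e \<Rightarrow> 'm \<Rightarrow> real)
    \<Rightarrow> ('e \<Rightarrow> 'm \<Rightarrow> real) \<Rightarrow> 'e + 'm \<Rightarrow> 'e + 'm \<Rightarrow> real" where
  "cramer_numerator y ybar r \<alpha> \<beta> =
     det (\<chi> i k. if k = \<beta> then (- axis \<alpha> 1) $ i else Bmat y ybar r $ i $ k)"

lemma zvec_mult_det_Bmat:
  assumes "det (SR y ybar r) \<noteq> 0"
  shows "zvec y ybar r \<alpha> $ \<beta> * det (Bmat y ybar r) = cramer_numerator y ybar r \<alpha> \<beta>"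
  using cramer_lemma[where A = "Bmat y ybar r" and x = "zvec y ybar r \<alpha>" and k = \<beta>]
  unfolding cramer_numerator_def Bmat_mult_zvec[OF assms] by simp

definition rate_line :: "('e \<Rightarrow> 'm \<Rightarrow> real) \<Rightarrow> ('e \<Rightarrow> 'm \<Rightarrow> real) \<Rightarrow> real \<Rightarrow> 'e \<Rightarrow> 'm \<Rightarrow> real" where
  "rate_line r d t = (\<lambda>j m. r j m + t * d j m)"

lemma rate_line_zero [simp]: "rate_line r d 0 = r"
  by (simp add: rate_line_def)

lemma real_polynomial_function_rate_matrix_line:
  "real_polynomial_function (\<lambda>t. rate_matrix y (rate_line r d t) $ j $ m)"
  by (cases "y j m = 0") (simp_all add: rate_matrix_def rate_line_def real_polynomial_function.intros)

lemma real_polynomial_function_Bmat_line: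
  "real_polynomial_function (\<lambda>t. Bmat y ybar (rate_line r d t) $ i $ k)"
  by (cases i; cases k)
    (simp_all add: Bmat_def real_polynomial_function_rate_matrix_line real_polynomial_function.intros)

lemma real_polynomial_function_det_SR_line:
  "real_polynomial_function (\<lambda>t. det (SR y ybar (rate_line r d t)))"
  by (intro real_polynomial_function_det)
    (simp add: matrix_matrix_mult_def real_polynomial_function_sum real_polynomial_function.intros
      real_polynomial_function_rate_matrix_line)

lemma real_polynomial_function_cramer_numerator_line:
  "real_polynomial_function (\<lambda>t. cramer_numerator y ybar (rate_line r d t) \<alpha> \<beta>)"
  unfolding cramer_numerator_def
proof (intro real_polynomial_function_det)
  fix i k
  show "real_polynomial_function (\<lambda>t. (\<chi> i k. if k = \<beta> then (- axis \<alpha> 1) $ i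
      else Bmat y ybar (rate_line r d t) $ i $ k) $ i $ k)"
    by (cases "k = \<beta>") (simp_all add: real_polynomial_function_Bmat_line real_polynomial_function.intros)
qed

lemma finite_singular_on_rate_line:
  assumes "det (SR y ybar (rate_line r d t0)) \<noteq> 0"
  shows "finite {t. det (SR y ybar (rate_line r d t)) = 0}"
  using real_polynomial_function_finite_zeros[OF real_polynomial_function_det_SR_line assms] .

lemma finite_not_influencing_on_rate_line:
  assumes "det (SR y ybar (rate_line r d t0)) \<noteq> 0" and "zvec y ybar (rate_line r d t0) \<alpha> $ \<beta> \<noteq> 0"
  shows "finite {t. det (SR y ybar (rate_line r d t)) = 0 \<or> zvec y ybar (rate_line r d t) \<alpha> $ \<beta> = 0}"
proof -
  let ?N = "\<lambda>t. cramer_numerator y ybar (rate_line r d t) \<alpha> \<beta>"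
  have "?N t0 \<noteq> 0"
    using assms zvec_mult_det_Bmat invertible_Bmat invertible_det_nz by (metis mult_eq_0_iff)
  then have "finite {t. ?N t = 0}"
    by (rule real_polynomial_function_finite_zeros[OF real_polynomial_function_cramer_numerator_line])
  moreover have "det (SR y ybar (rate_line r d t)) = 0 \<or> ?N t = 0"
    if "zvec y ybar (rate_line r d t) \<alpha> $ \<beta> = 0" for t
    using that zvec_mult_det_Bmat[of y ybar "rate_line r d t" \<alpha> \<beta>] by auto
  then have "{t. det (SR y ybar (rate_line r d t)) = 0 \<or> zvec y ybar (rate_line r d t) \<alpha> $ \<beta> = 0}
      \<subseteq> {t. det (SR y ybar (rate_line r d t)) = 0} \<union> {t. ?N t = 0}"
    by blast
  ultimately show ?thesis
    using finite_singular_on_rate_line[OF assms(1)] by (auto intro: finite_subset)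
qed

text \<open>Two nonzero rational functions have a nonzero product.\<close>

lemma influences_common_point:
  assumes "influences y ybar \<alpha>1 \<beta>1" and "influences y ybar \<alpha>2 \<beta>2"
  shows "\<exists>r. det (SR y ybar r) \<noteq> 0 \<and> zvec y ybar r \<alpha>1 $ \<beta>1 \<noteq> 0 \<and> zvec y ybar r \<alpha>2 $ \<beta>2 \<noteq> 0"
proof -
  obtain r0 r1 where r0: "det (SR y ybar r0) \<noteq> 0" "zvec y ybar r0 \<alpha>1 $ \<beta>1 \<noteq> 0"
    and r1: "det (SR y ybar r1) \<noteq> 0" "zvec y ybar r1 \<alpha>2 $ \<beta>2 \<noteq> 0"
    using assms unfolding influences_def by blast
  define d where "d = (\<lambda>j m. r1 j m - r0 j m)"
  let ?bad = "\<lambda>\<alpha> \<beta>. {t. det (SR y ybar (rate_line r0 d t)) = 0 \<or> zvec y ybar (rate_line r0 d t) \<alpha> $ \<beta> = 0}"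
  have "rate_line r0 d 1 = r1"
    by (auto simp: rate_line_def d_def)
  then have "finite (?bad \<alpha>1 \<beta>1 \<union> ?bad \<alpha>2 \<beta>2)"
    using finite_not_influencing_on_rate_line[of y ybar r0 d 0 \<alpha>1 \<beta>1]
      finite_not_influencing_on_rate_line[of y ybar r0 d 1 \<alpha>2 \<beta>2] r0 r1 by simp
  then obtain t where "t \<notin> ?bad \<alpha>1 \<beta>1 \<union> ?bad \<alpha>2 \<beta>2"
    using ex_new_if_finite[OF infinite_UNIV_char_0] by blast
  then show ?thesis by blast
qed

definition rate_unit :: "'e \<Rightarrow> 'm \<Rightarrow> 'e \<Rightarrow> 'm \<Rightarrow> real" where
  "rate_unit ja ma = (\<lambda>j m. of_bool (j = ja \<and> m = ma))"

lemma Bmat_rate_unit_mult: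
  assumes "y ja ma \<noteq> 0"
  shows "Bmat y ybar (rate_line r (rate_unit ja ma) s) *v v
    = Bmat y ybar r *v v + (s * v $ Inr ma) *s axis (Inl ja) 1"
proof -
  have "rate_matrix y (rate_line r (rate_unit ja ma) s) $ j $ m * v $ Inr m
      = rate_matrix y r $ j $ m * v $ Inr m + (if m = ma then (if j = ja then s * v $ Inr m else 0) else 0)"
    for j m
    using assms by (auto simp: rate_matrix_def rate_line_def rate_unit_def algebra_simps)
  then have row: "(\<Sum>m\<in>UNIV. rate_matrix y (rate_line r (rate_unit ja ma) s) $ j $ m * v $ Inr m)
      = (\<Sum>m\<in>UNIV. rate_matrix y r $ j $ m * v $ Inr m) + (if j = ja then s * v $ Inr ma else 0)" for j
    by (simp add: sum.distrib)
  show ?thesis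
  proof (rule vec_eq_iff[THEN iffD2], rule allI)
    fix i
    show "(Bmat y ybar (rate_line r (rate_unit ja ma) s) *v v) $ i
        = (Bmat y ybar r *v v + (s * v $ Inr ma) *s axis (Inl ja) 1) $ i"
      using row by (cases i) (auto simp: Bmat_mult_Inl Bmat_mult_Inr axis_def)
  qed
qed

lemma zvec_rate_unit_perturbation:
  assumes "det (SR y ybar r) \<noteq> 0" and "det (SR y ybar (rate_line r (rate_unit ja ma) s)) \<noteq> 0"
    and "y ja ma \<noteq> 0"
  shows "1 - s * zvec y ybar r (Inl ja) $ Inr ma \<noteq> 0"
    and "zvec y ybar (rate_line r (rate_unit ja ma) s) (Inl jb) = zvec y ybar r (Inl jb)
      + (s * zvec y ybar r (Inl jb) $ Inr ma / (1 - s * zvec y ybar r (Inl ja) $ Inr ma))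
        *s zvec y ybar r (Inl ja)"
proof -
  note update = rank_one_update_solution[OF invertible_Bmat[OF assms(2)]
      Bmat_rate_unit_mult[where y = y and ja = ja and ma = ma, OF assms(3)] _
      Bmat_mult_zvec[OF assms(1)] Bmat_mult_zvec[OF assms(1)]]
  show "1 - s * zvec y ybar r (Inl ja) $ Inr ma \<noteq> 0"
    by (rule update(1)) (simp add: axis_eq_0_iff)
  show "zvec y ybar (rate_line r (rate_unit ja ma) s) (Inl jb) = zvec y ybar r (Inl jb)
      + (s * zvec y ybar r (Inl jb) $ Inr ma / (1 - s * zvec y ybar r (Inl ja) $ Inr ma))
        *s zvec y ybar r (Inl ja)"
    by (intro zvec_eqI[OF assms(2)] update(2)) (simp add: axis_eq_0_iff)
qed

lemma influences_trans:
  assumes "influences y ybar (Inl j1) (Inl j2)" and "influences y ybar (Inl j2) \<beta>"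
  shows "influences y ybar (Inl j1) \<beta>"
proof (cases "j1 = j2")
  case True
  then show ?thesis using assms(2) by simp
next
  case False
  obtain r where adm: "det (SR y ybar r) \<noteq> 0" and z1: "zvec y ybar r (Inl j1) $ Inl j2 \<noteq> 0"
    and z2: "zvec y ybar r (Inl j2) $ \<beta> \<noteq> 0"
    using influences_common_point[OF assms] by blast
  have "(\<Sum>m\<in>UNIV. rate_matrix y r $ j2 $ m * zvec y ybar r (Inl j1) $ Inr m) \<noteq> 0"
    using z1 zvec_Inl_eq_sum[OF adm] False by simp
  then obtain m0 where "rate_matrix y r $ j2 $ m0 * zvec y ybar r (Inl j1) $ Inr m0 \<noteq> 0"
    by (meson sum.neutral)
  then have y: "y j2 m0 \<noteq> 0" and z1m0: "zvec y ybar r (Inl j1) $ Inr m0 \<noteq> 0"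
    by (auto simp: rate_matrix_def split: if_splits)
  show ?thesis
  proof (cases "zvec y ybar r (Inl j1) $ \<beta> = 0")
    case False
    then show ?thesis using adm unfolding influences_def by blast
  next
    case True
    have "finite (insert 0 {s. det (SR y ybar (rate_line r (rate_unit j2 m0) s)) = 0})"
      using finite_singular_on_rate_line[of y ybar r _ 0] adm by simp
    then obtain s where "s \<noteq> 0" and adm': "det (SR y ybar (rate_line r (rate_unit j2 m0) s)) \<noteq> 0"
      using ex_new_if_finite[OF infinite_UNIV_char_0] by blast
    note perturbation = zvec_rate_unit_perturbation[OF adm adm' y]
    have "zvec y ybar (rate_line r (rate_unit j2 m0) s) (Inl j1) $ \<beta>
        = s * zvec y ybar r (Inl j1) $ Inr m0 / (1 - s * zvec y ybar r (Inl j2) $ Inr m0)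
          * zvec y ybar r (Inl j2) $ \<beta>"
      using perturbation(2) True by simp
    also have "\<dots> \<noteq> 0"
      using perturbation(1) \<open>s \<noteq> 0\<close> z1m0 z2 by simp
    finally show ?thesis using adm' unfolding influences_def by blast
  qed
qed

lemma rxn_equiv_refl [simp]: "rxn_equiv y ybar j j"
  by (simp add: rxn_equiv_def)

lemma rxn_equiv_sym: "rxn_equiv y ybar j k \<Longrightarrow> rxn_equiv y ybar k j"
  by (auto simp: rxn_equiv_def)

lemma rxn_equiv_trans: "rxn_equiv y ybar j k \<Longrightarrow> rxn_equiv y ybar k l \<Longrightarrow> rxn_equiv y ybar j l"
  unfolding rxn_equiv_def by (metis influences_trans)

lemma equivp_rxn_equiv: "equivp (rxn_equiv y ybar)"
  by (intro equivpI reflpI sympI transpI) (auto intro: rxn_equiv_sym rxn_equiv_trans)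

lemma influences_if_rxn_equiv:
  "rxn_equiv y ybar j k \<Longrightarrow> j \<noteq> k \<Longrightarrow> influences y ybar (Inl j) (Inl k)"
  by (simp add: rxn_equiv_def)

lemma influences_rxn_equiv_left:
  "rxn_equiv y ybar j j' \<Longrightarrow> influences y ybar (Inl j') \<beta> \<Longrightarrow> influences y ybar (Inl j) \<beta>"
  by (metis influences_if_rxn_equiv influences_trans)

lemma influences_rxn_equiv_right:
  "influences y ybar (Inl j) (Inl k) \<Longrightarrow> rxn_equiv y ybar k k' \<Longrightarrow> influences y ybar (Inl j) (Inl k')"
  by (metis influences_if_rxn_equiv influences_trans)

lemma mem_rxn_class_iff: "k \<in> rxn_class y ybar j \<longleftrightarrow> rxn_equiv y ybar j k"
  by (simp add: rxn_class_def)

lemma self_mem_rxn_class [simp]: "j \<in> rxn_class y ybar j"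
  by (simp add: mem_rxn_class_iff)

lemma rxn_class_eq_iff: "rxn_class y ybar j = rxn_class y ybar k \<longleftrightarrow> rxn_equiv y ybar j k"
proof
  assume "rxn_class y ybar j = rxn_class y ybar k"
  then have "k \<in> rxn_class y ybar j" by simp
  then show "rxn_equiv y ybar j k" by (simp add: mem_rxn_class_iff)
next
  assume "rxn_equiv y ybar j k"
  then show "rxn_class y ybar j = rxn_class y ybar k"
    unfolding rxn_class_def by (blast intro: rxn_equiv_sym rxn_equiv_trans)
qed

lemma rxn_classes_eq_range: "rxn_classes y ybar = range (rxn_class y ybar)"
  by (auto simp: rxn_classes_def quotient_def rxn_class_def)

lemma influences_within_rxn_class:
  assumes "card (rxn_class y ybar j0) \<ge> 2"
    and "j \<in> rxn_class y ybar j0" and "j' \<in> rxn_class y ybar j0"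
  shows "influences y ybar (Inl j) (Inl j')"
proof -
  have "\<not> rxn_class y ybar j0 \<subseteq> {j}"
    using assms(1) card_mono[of "{j}" "rxn_class y ybar j0"] by auto
  then obtain k where k: "k \<in> rxn_class y ybar j0" "k \<noteq> j" by blast
  have jk: "rxn_equiv y ybar j k" and jj': "rxn_equiv y ybar j j'"
    using assms(2,3) k(1) by (meson mem_rxn_class_iff rxn_equiv_sym rxn_equiv_trans)+
  have "influences y ybar (Inl j) (Inl j)"
    using influences_trans[OF influences_if_rxn_equiv[OF jk k(2)[symmetric]]
        influences_if_rxn_equiv[OF rxn_equiv_sym[OF jk] k(2)]] .
  then show ?thesis using jj' by (rule influences_rxn_equiv_right)
qed

lemma influences_between_rxn_classes:
  assumes "influences y ybar (Inl j1) (Inl j2)" and "\<not> rxn_equiv y ybar j1 j2"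
    and "rxn_equiv y ybar j1' j1" and "rxn_equiv y ybar j2' j2"
  shows "influences y ybar (Inl j1') (Inl j2')" and "\<not> influences y ybar (Inl j2') (Inl j1')"
proof -
  show "influences y ybar (Inl j1') (Inl j2')"
    using influences_rxn_equiv_left[OF assms(3,1)] rxn_equiv_sym[OF assms(4)]
    by (rule influences_rxn_equiv_right)
  show "\<not> influences y ybar (Inl j2') (Inl j1')"
  proof
    assume "influences y ybar (Inl j2') (Inl j1')"
    then have "influences y ybar (Inl j2) (Inl j1)"
      using influences_rxn_equiv_left[OF rxn_equiv_sym[OF assms(4)]] assms(3)
      by (blast intro: influences_rxn_equiv_right)
    then show False using assms(1,2) by (simp add: rxn_equiv_def)
  qed
qed

lemma class_prec_rxn_class_iff:
  "class_prec y ybar (rxn_class y ybar j) (rxn_class y ybar k)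
    \<longleftrightarrow> \<not> rxn_equiv y ybar j k \<and> influences y ybar (Inl j) (Inl k)"
proof
  assume "class_prec y ybar (rxn_class y ybar j) (rxn_class y ybar k)"
  then obtain a b where "\<not> rxn_equiv y ybar j k" "rxn_equiv y ybar j a" "rxn_equiv y ybar k b"
    "influences y ybar (Inl a) (Inl b)"
    unfolding class_prec_def rxn_class_eq_iff mem_rxn_class_iff[symmetric] by blast
  then show "\<not> rxn_equiv y ybar j k \<and> influences y ybar (Inl j) (Inl k)"
    by (meson influences_rxn_equiv_left influences_rxn_equiv_right rxn_equiv_sym)
next
  assume "\<not> rxn_equiv y ybar j k \<and> influences y ybar (Inl j) (Inl k)"
  then show "class_prec y ybar (rxn_class y ybar j) (rxn_class y ybar k)"
    unfolding class_prec_def rxn_class_eq_iff using self_mem_rxn_class by blast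
qed

lemma class_prec_trans:
  assumes "\<phi>1 \<in> rxn_classes y ybar" "\<phi>2 \<in> rxn_classes y ybar" "\<phi>3 \<in> rxn_classes y ybar"
    and "class_prec y ybar \<phi>1 \<phi>2" and "class_prec y ybar \<phi>2 \<phi>3"
  shows "class_prec y ybar \<phi>1 \<phi>3"
proof -
  obtain j1 j2 j3 where \<phi>: "\<phi>1 = rxn_class y ybar j1" "\<phi>2 = rxn_class y ybar j2" "\<phi>3 = rxn_class y ybar j3"
    using assms(1-3) by (auto simp: rxn_classes_eq_range)
  have 12: "\<not> rxn_equiv y ybar j1 j2" "influences y ybar (Inl j1) (Inl j2)"
    and 23: "\<not> rxn_equiv y ybar j2 j3" "influences y ybar (Inl j2) (Inl j3)"
    using assms(4,5) by (simp_all add: \<phi> class_prec_rxn_class_iff)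
  have "\<not> rxn_equiv y ybar j1 j3"
    using influences_between_rxn_classes(2)[OF 23(2,1) rxn_equiv_refl] 12 by (auto dest: rxn_equiv_sym)
  then show ?thesis
    using 12(2) 23(2) by (simp add: \<phi> class_prec_rxn_class_iff influences_trans)
qed

lemma influences_iff_rxn_class:
  assumes "j' \<noteq> j"
  shows "influences y ybar (Inl j) (Inl j') \<longleftrightarrow>
    j' \<in> rxn_class y ybar j \<or> class_prec y ybar (rxn_class y ybar j) (rxn_class y ybar j')"
  using assms by (auto simp: class_prec_rxn_class_iff mem_rxn_class_iff influences_if_rxn_equiv)

lemma IM_antimono: "influences y ybar (Inl j1) (Inl j2) \<Longrightarrow> IM y ybar j2 \<subseteq> IM y ybar j1"
  by (auto simp: IM_def intro: influences_trans)

lemma IM_eq_if_rxn_equiv: "rxn_equiv y ybar j1 j2 \<Longrightarrow> IM y ybar j1 = IM y ybar j2"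
  by (auto simp: IM_def intro: influences_rxn_equiv_left rxn_equiv_sym)

lemma M_nd_subset_IM: "M_nd y ybar j \<subseteq> IM y ybar j"
  by (auto simp: IM_def M_nd_def intro: influences_trans)

definition downstream :: "('e::finite \<Rightarrow> 'm::finite \<Rightarrow> real) \<Rightarrow> ('e \<Rightarrow> 'm \<Rightarrow> real) \<Rightarrow> 'e \<Rightarrow> 'e set" where
  "downstream y ybar j = insert j {k. influences y ybar (Inl j) (Inl k)}"

lemma card_downstream_less:
  assumes "influences y ybar (Inl j) (Inl k)" and "\<not> rxn_equiv y ybar j k"
  shows "card (downstream y ybar k) < card (downstream y ybar j)"
proof (rule psubset_card_mono)
  have "j \<notin> downstream y ybar k"
    using assms by (auto simp: downstream_def rxn_equiv_def)
  moreover have "downstream y ybar k \<subseteq> downstream y ybar j"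
    using assms(1) by (auto simp: downstream_def intro: influences_trans)
  ultimately show "downstream y ybar k \<subset> downstream y ybar j"
    by (auto simp: downstream_def)
qed simp

text \<open>Among the reactions outside the class of \<open>j\<close> through which \<open>j\<close> influences \<open>m\<close>, one
  with the fewest downstream reactions influences \<open>m\<close> directly.\<close>

lemma M_d_witness:
  assumes "j' \<notin> rxn_class y ybar j" and "influences y ybar (Inl j) (Inl j')"
    and "influences y ybar (Inl j') (Inr m)"
  shows "\<exists>j''. j'' \<notin> rxn_class y ybar j \<and> influences y ybar (Inl j) (Inl j'') \<and> m \<in> M_d y ybar j''"
proof -
  let ?witness = "\<lambda>k. k \<notin> rxn_class y ybar j \<and> influences y ybar (Inl j) (Inl k)
    \<and> influences y ybar (Inl k) (Inr m)"
  obtain k where k: "?witness k"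
    and least: "\<And>k'. ?witness k' \<Longrightarrow> card (downstream y ybar k) \<le> card (downstream y ybar k')"
    using ex_has_least_nat[of ?witness j' "\<lambda>k. card (downstream y ybar k)"] assms by blast
  have "m \<notin> M_nd y ybar k"
  proof
    assume "m \<in> M_nd y ybar k"
    then obtain k' where k': "\<not> rxn_equiv y ybar k k'" "influences y ybar (Inl k) (Inl k')"
      "influences y ybar (Inl k') (Inr m)"
      by (auto simp: M_nd_def mem_rxn_class_iff)
    have "k' \<notin> rxn_class y ybar j"
    proof
      assume "k' \<in> rxn_class y ybar j"
      then have "influences y ybar (Inl k) (Inl j)"
        using k'(2) by (auto simp: mem_rxn_class_iff intro: influences_rxn_equiv_right rxn_equiv_sym)
      then show False using k by (auto simp: mem_rxn_class_iff rxn_equiv_def)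
    qed
    then have "?witness k'" using k k'(2,3) influences_trans by blast
    then show False using least card_downstream_less[OF k'(2,1)] by fastforce
  qed
  then show ?thesis using k by (auto simp: M_d_def IM_def)
qed

lemma influences_Inr_iff_M_d:
  "influences y ybar (Inl j) (Inr m) \<longleftrightarrow> m \<in> M_d y ybar j \<or>
    (\<exists>j'. j' \<notin> rxn_class y ybar j \<and> influences y ybar (Inl j) (Inl j') \<and> m \<in> M_d y ybar j')"
proof
  assume m: "influences y ybar (Inl j) (Inr m)"
  show "m \<in> M_d y ybar j \<or>
    (\<exists>j'. j' \<notin> rxn_class y ybar j \<and> influences y ybar (Inl j) (Inl j') \<and> m \<in> M_d y ybar j')"
  proof (cases "m \<in> M_nd y ybar j")
    case True
    then show ?thesis by (auto simp: M_nd_def dest: M_d_witness)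
  next
    case False
    then show ?thesis using m by (simp add: M_d_def IM_def)
  qed
next
  assume "m \<in> M_d y ybar j \<or>
    (\<exists>j'. j' \<notin> rxn_class y ybar j \<and> influences y ybar (Inl j) (Inl j') \<and> m \<in> M_d y ybar j')"
  then show "influences y ybar (Inl j) (Inr m)"
    by (auto simp: M_d_def IM_def intro: influences_trans)
qed

lemma IM_eq_M_d_Union:
  "IM y ybar j = M_d y ybar j \<union>
    (\<Union>j'\<in>{j'. influences y ybar (Inl j) (Inl j') \<and> j' \<notin> rxn_class y ybar j}. M_d y ybar j')"
  using influences_Inr_iff_M_d[of y ybar j] by (auto simp: IM_def)

theorem theorem2p7:
  fixes y ybar :: "'e::finite \<Rightarrow> 'm::finite \<Rightarrow> real"
  assumes nonneg_y: "\<And>j m. y j m \<ge> 0"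
    and nonneg_ybar: "\<And>j m. ybar j m \<ge> 0"
    and full_rank: "rank (stoich y ybar) = CARD('m)"
    and reg: "regular y ybar"
  shows
    \<comment> \<open>(a)\<close>
    "equivp (rxn_equiv y ybar)
     \<comment> \<open>(b)\<close>
     \<and> (\<forall>\<phi>\<in>rxn_classes y ybar. card \<phi> \<ge> 2 \<longrightarrow>
          (\<forall>j\<in>\<phi>. \<forall>j'\<in>\<phi>. influences y ybar (Inl j) (Inl j')))
     \<comment> \<open>(c)\<close>
     \<and> (\<forall>j1 j2. influences y ybar (Inl j1) (Inl j2) \<and> \<not> rxn_equiv y ybar j1 j2 \<longrightarrow>
          (\<forall>j1' j2'. rxn_equiv y ybar j1' j1 \<and> rxn_equiv y ybar j2' j2 \<longrightarrow>
             influences y ybar (Inl j1') (Inl j2') \<and> \<not> influences y ybar (Inl j2') (Inl j1')))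
     \<and> (\<forall>\<phi>\<in>rxn_classes y ybar. \<not> class_prec y ybar \<phi> \<phi>)
     \<and> (\<forall>\<phi>1\<in>rxn_classes y ybar. \<forall>\<phi>2\<in>rxn_classes y ybar. \<forall>\<phi>3\<in>rxn_classes y ybar.
          class_prec y ybar \<phi>1 \<phi>2 \<and> class_prec y ybar \<phi>2 \<phi>3 \<longrightarrow> class_prec y ybar \<phi>1 \<phi>3)
     \<and> (\<forall>js j'. j' \<noteq> js \<longrightarrow>
          (influences y ybar (Inl js) (Inl j') \<longleftrightarrow>
             j' \<in> rxn_class y ybar js \<or> class_prec y ybar (rxn_class y ybar js) (rxn_class y ybar j')))
     \<comment> \<open>(d)\<close>
     \<and> (\<forall>j1 j2. influences y ybar (Inl j1) (Inl j2) \<longrightarrow> IM y ybar j2 \<subseteq> IM y ybar j1)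
     \<and> (\<forall>j1 j2. rxn_equiv y ybar j1 j2 \<longrightarrow> IM y ybar j1 = IM y ybar j2)
     \<comment> \<open>(e)\<close>
     \<and> (\<forall>js. M_nd y ybar js \<subseteq> IM y ybar js)
     \<and> (\<forall>js m'. influences y ybar (Inl js) (Inr m') \<longleftrightarrow>
          m' \<in> M_d y ybar js \<or>
          (\<exists>j'. j' \<notin> rxn_class y ybar js \<and> influences y ybar (Inl js) (Inl j') \<and> m' \<in> M_d y ybar j'))
     \<and> (\<forall>js. IM y ybar js = M_d y ybar js \<union>
          (\<Union>j'\<in>{j'. influences y ybar (Inl js) (Inl j') \<and> j' \<notin> rxn_class y ybar js}. M_d y ybar j'))"
  apply (intro conjI)
  subgoal by (rule equivp_rxn_equiv)
  subgoal by (auto simp: rxn_classes_eq_range intro: influences_within_rxn_class)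
  subgoal using influences_between_rxn_classes by blast
  subgoal by (simp add: class_prec_def)
  subgoal using class_prec_trans by blast
  subgoal using influences_iff_rxn_class by blast
  subgoal using IM_antimono by blast
  subgoal using IM_eq_if_rxn_equiv by blast
  subgoal using M_nd_subset_IM by blast
  subgoal using influences_Inr_iff_M_d by blast
  subgoal using IM_eq_M_d_Union by blast
  done

end
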